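(* Let $\tau\in\mathcal{P}^\pm$, $\alpha,\beta\in\mathbb{R}$, and suppose $T_{\mathrm{ng}}=T_{\mathrm{ng}}(\tau;\alpha,\beta)$ is an exceptional Jacobi operator; let $T_{\mathrm{rg}}=T_{\mathrm{rg}}(\tau;\alpha,\beta)$ and $N=\deg\tau$. Every quasi-polynomial eigenfunction of $T_{\mathrm{rg}}$ has the form $\pi_k(x)=P_n(x)/\tau(x)$ with $k\in I_1(T_{\mathrm{rg}})$, $k=n-N$, where $P_n\in\mathcal{P}^\pm$ is an eigenpolynomial of $T_{\mathrm{ng}}$ of degree $n$. Moreover, if $\alpha,\beta\notin\mathbb{Z}_-$, then $I_1(T_{\mathrm{rg}})=I(T_{\mathrm{ng}})-N$ and $\sigma_{\mathcal{P}}(T_{\mathrm{ng}})=\sigma_1(T_{\mathrm{rg}})=\{k(k+\alpha+\beta+1):k\in I_1(T_{\mathrm{rg}})\}$.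
   Context: $D=d/dx$; $\mathcal{P}^\pm$ denotes the set of real polynomials not vanishing at $x=\pm1$; $\mathbb{Z}_-=\{-1,-2,\ldots\}$. $\eta(x;\alpha,\beta)=\frac{\alpha+1}{x-1}+\frac{\beta+1}{x+1}$; $T_{\mathrm{ng}}(\tau;\alpha,\beta)=(x^2-1)\big(D^2-2\frac{\tau'}{\tau}D+\frac{\tau''}{\tau}+\eta(D-\frac{\tau'}{\tau})\big)+2x\frac{\tau'}{\tau}$; $T_{\mathrm{rg}}(\tau;\alpha,\beta)=\tau^{-1}\circ T_{\mathrm{ng}}(\tau;\alpha,\beta)\circ\tau$. An eigenpolynomial of an operator $T$ is a nonzero polynomial $P$ with $TP=\lambda P$ for a constant $\lambda$; $\sigma_{\mathcal{P}}(T)$ is the set of such $\lambda$ and $I(T)$ the set of degrees of eigenpolynomials. $T_{\mathrm{ng}}$ is exceptional if $\mathbb{N}_0\setminus I(T_{\mathrm{ng}})$ is finite. A quasi-polynomial eigenfunction of $T$ is a rational solution $\pi$ of $T\pi=\lambda\pi$ with no zeros or poles at $x=\pm1$; its degree is the degree of the numerator minus that of the denominator; $I_1(T)$ is the set of such degrees and $\sigma_1(T)$ the set of corresponding eigenvalues. *)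

theory Defs
  imports "HOL-Analysis.Analysis" "HOL-Computational_Algebra.Polynomial"
begin

text \<open>Real functions; the operators are evaluated pointwise away from the
  singular points x = 1, x = -1 and the zeros of tau.\<close>

definition eta :: "real \<Rightarrow> real \<Rightarrow> real \<Rightarrow> real" where
  "eta \<alpha> \<beta> x = (\<alpha> + 1) / (x - 1) + (\<beta> + 1) / (x + 1)"

definition Tng :: "real poly \<Rightarrow> real \<Rightarrow> real \<Rightarrow> (real \<Rightarrow> real) \<Rightarrow> real \<Rightarrow> real" where
  "Tng \<tau> \<alpha> \<beta> f x =
     (let t = poly \<tau> x; t1 = poly (pderiv \<tau>) x; t2 = poly (pderiv (pderiv \<tau>)) x in
      (x^2 - 1) * (deriv (deriv f) x - 2 * (t1 / t) * deriv f x + (t2 / t) * f x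
                   + eta \<alpha> \<beta> x * (deriv f x - (t1 / t) * f x))
      + 2 * x * (t1 / t) * f x)"

definition Trg :: "real poly \<Rightarrow> real \<Rightarrow> real \<Rightarrow> (real \<Rightarrow> real) \<Rightarrow> real \<Rightarrow> real" where
  "Trg \<tau> \<alpha> \<beta> f x = Tng \<tau> \<alpha> \<beta> (\<lambda>y. poly \<tau> y * f y) x / poly \<tau> x"

definition Ppm :: "real poly set" where
  "Ppm = {P. poly P 1 \<noteq> 0 \<and> poly P (-1) \<noteq> 0}"

text \<open>Eigenpolynomial P of T_ng with eigenvalue lam: T_ng P = lam P as rational
  functions, i.e. pointwise off the finitely many singular points.\<close>
definition eigenpoly_ng :: "real poly \<Rightarrow> real \<Rightarrow> real \<Rightarrow> real poly \<Rightarrow> real \<Rightarrow> bool" where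
  "eigenpoly_ng \<tau> \<alpha> \<beta> P lam \<longleftrightarrow> P \<noteq> 0 \<and>
     (\<forall>x. x \<noteq> 1 \<and> x \<noteq> -1 \<and> poly \<tau> x \<noteq> 0 \<longrightarrow>
          Tng \<tau> \<alpha> \<beta> (poly P) x = lam * poly P x)"

definition sigmaP_ng :: "real poly \<Rightarrow> real \<Rightarrow> real \<Rightarrow> real set" where
  "sigmaP_ng \<tau> \<alpha> \<beta> = {lam. \<exists>P. eigenpoly_ng \<tau> \<alpha> \<beta> P lam}"

definition I_ng :: "real poly \<Rightarrow> real \<Rightarrow> real \<Rightarrow> nat set" where
  "I_ng \<tau> \<alpha> \<beta> = {degree P | P lam. eigenpoly_ng \<tau> \<alpha> \<beta> P lam}"

definition exceptional_ng :: "real poly \<Rightarrow> real \<Rightarrow> real \<Rightarrow> bool" where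
  "exceptional_ng \<tau> \<alpha> \<beta> \<longleftrightarrow> finite (UNIV - I_ng \<tau> \<alpha> \<beta>)"

text \<open>Quasi-polynomial eigenfunction p/q of T_rg with eigenvalue lam: a rational
  function with no zeros/poles at +-1 (p, q not vanishing at +-1), satisfying
  T_rg (p/q) = lam (p/q) as rational functions.\<close>
definition quasi_eig_rg :: "real poly \<Rightarrow> real \<Rightarrow> real \<Rightarrow> real poly \<Rightarrow> real poly \<Rightarrow> real \<Rightarrow> bool" where
  "quasi_eig_rg \<tau> \<alpha> \<beta> p q lam \<longleftrightarrow> p \<in> Ppm \<and> q \<in> Ppm \<and>
     (\<forall>x. x \<noteq> 1 \<and> x \<noteq> -1 \<and> poly \<tau> x \<noteq> 0 \<and> poly q x \<noteq> 0 \<longrightarrow>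
          Trg \<tau> \<alpha> \<beta> (\<lambda>y. poly p y / poly q y) x = lam * (poly p x / poly q x))"

definition I1_rg :: "real poly \<Rightarrow> real \<Rightarrow> real \<Rightarrow> int set" where
  "I1_rg \<tau> \<alpha> \<beta> = {int (degree p) - int (degree q) | p q lam. quasi_eig_rg \<tau> \<alpha> \<beta> p q lam}"

definition sigma1_rg :: "real poly \<Rightarrow> real \<Rightarrow> real \<Rightarrow> real set" where
  "sigma1_rg \<tau> \<alpha> \<beta> = {lam. \<exists>p q. quasi_eig_rg \<tau> \<alpha> \<beta> p q lam}"

end

theory Submission
  imports Defs "HOL-Computational_Algebra.Polynomial_Factorial" "HOL-Computational_Algebra.Field_as_Ring"
    "HOL-Computational_Algebra.Fundamental_Theorem_Algebra"
begin

(* Clearing denominators, the eigenvalue equation T_ng f = lam f for f = A/B becomes a polynomial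
   identity for a second-order operator with polynomial coefficients.  At a point x0 <> +-1 where
   tau vanishes to order m, its indicial equation for the exponent rho of f is
   rho (rho - 2m - 1) + m (m - 1) = 0, which has no negative integer solution.  Hence the reduced
   form A/B of tau p/q has no complex poles, i.e. B is constant and tau p/q is a polynomial P.
   At +-1 the exponents are 0 and -alpha, resp. -beta, so P does not vanish there unless alpha or
   beta is a negative integer, and the indicial equation at infinity gives
   lam = k (k + alpha + beta + 1) with k = deg P - deg tau. *)

lemma coeff_mult_degree_le:
  fixes F G :: "'a::idom poly"
  assumes "degree F \<le> i" "degree G \<le> j"
  shows "coeff (F * G) (i + j) = coeff F i * coeff G j"
proof (cases "degree F = i \<and> degree G = j")
  case True
  then show ?thesis
    using coeff_mult_degree_sum[of F G] by simp
next
  case False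
  then have "degree F < i \<or> degree G < j"
    using assms by auto
  then have "degree (F * G) < i + j" "coeff F i * coeff G j = 0"
    using assms degree_mult_le[of F G] by (auto simp: coeff_eq_0)
  then show ?thesis
    by (simp add: coeff_eq_0)
qed

lemma degree_mult_le_add:
  fixes F G :: "'a::idom poly"
  assumes "degree F \<le> i" "degree G \<le> j"
  shows "degree (F * G) \<le> i + j"
  using assms degree_mult_le[of F G] by linarith

lemma coeff_euler_pderiv:
  fixes P :: "'a::idom poly"
  shows "coeff ([:0, 1:] * pderiv P) i = of_nat i * coeff P i"
  by (cases i) (simp_all add: coeff_pderiv)

lemma coeff_euler_pderiv2:
  fixes P :: "'a::idom poly"
  shows "coeff ([:0, 1:]^2 * pderiv (pderiv P)) i = of_nat i * (of_nat i - 1) * coeff P i"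
proof -
  consider "i = 0" | "i = 1" | j where "i = Suc (Suc j)"
    by (metis One_nat_def not0_implies_Suc)
  then show ?thesis
    by cases (simp_all add: coeff_pderiv power2_eq_square algebra_simps)
qed

lemma degree_euler_pderiv: "degree ([:0, 1:] * pderiv P) \<le> degree (P :: 'a::idom poly)"
proof (intro degree_le allI impI)
  fix i
  assume "degree P < i"
  then show "coeff ([:0, 1:] * pderiv P) i = 0"
    unfolding coeff_euler_pderiv by (simp add: coeff_eq_0)
qed

lemma degree_euler_pderiv2: "degree ([:0, 1:]^2 * pderiv (pderiv P)) \<le> degree (P :: 'a::idom poly)"
proof (intro degree_le allI impI)
  fix i
  assume "degree P < i"
  then show "coeff ([:0, 1:]^2 * pderiv (pderiv P)) i = 0"
    unfolding coeff_euler_pderiv2 by (simp add: coeff_eq_0)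
qed

lemma pderiv_linear_power_mult:
  fixes z :: "'a::idom poly"
  assumes "pderiv z = 1"
  shows "z * pderiv (z^k * G) = z^k * (of_nat k * G + z * pderiv G)"
proof (induction k)
  case (Suc k)
  have "z * pderiv (z^Suc k * G) = z * (z^k * G) + z * (z * pderiv (z^k * G))"
    using assms by (simp add: pderiv_mult algebra_simps)
  then show ?case
    unfolding Suc by (simp add: algebra_simps)
qed simp

lemma pderiv2_linear_power_mult:
  fixes z :: "'a::idom poly"
  assumes z: "pderiv z = 1"
  shows "z^2 * pderiv (pderiv (z^k * G))
       = z^k * (of_nat k * (of_nat k - 1) * G + 2 * of_nat k * (z * pderiv G) + z^2 * pderiv (pderiv G))"
proof -
  define G1 where "G1 = of_nat k * G + z * pderiv G"
  have "z * pderiv (z * H) = z * H + z^2 * pderiv H" for H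
    using z by (simp add: pderiv_mult power2_eq_square algebra_simps)
  then have "z * pderiv (z^k * G) + z^2 * pderiv (pderiv (z^k * G)) = z * pderiv (z * pderiv (z^k * G))"
    by simp
  then have "z^k * G1 + z^2 * pderiv (pderiv (z^k * G)) = z^k * (of_nat k * G1 + z * pderiv G1)"
    by (simp only: pderiv_linear_power_mult[OF z] G1_def)
  moreover have "z * pderiv G1 = of_nat k * (z * pderiv G) + z * pderiv G + z^2 * pderiv (pderiv G)"
    using z by (simp add: G1_def pderiv_mult pderiv_add power2_eq_square algebra_simps)
  ultimately have "z^2 * pderiv (pderiv (z^k * G))
      = z^k * (of_nat k * G1 + (of_nat k * (z * pderiv G) + z * pderiv G + z^2 * pderiv (pderiv G)))
        - z^k * G1"
    by (metis add_diff_cancel_left')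
  then show ?thesis
    unfolding G1_def by (simp add: algebra_simps)
qed

lemma poly_eq_0_if_cofinite_roots:
  fixes p :: "'a::{idom, ring_char_0} poly"
  assumes "finite S" and "\<And>x. x \<notin> S \<Longrightarrow> poly p x = 0"
  shows "p = 0"
proof (rule ccontr)
  assume "p \<noteq> 0"
  then have "finite (S \<union> {x. poly p x = 0})"
    using assms(1) poly_roots_finite by blast
  moreover have "S \<union> {x. poly p x = 0} = UNIV"
    using assms(2) by blast
  ultimately show False
    using infinite_UNIV_char_0 by metis
qed

lemma eventually_poly_nonzero:
  fixes D :: "real poly"
  assumes "poly D x \<noteq> 0"
  shows "\<forall>\<^sub>F y in nhds x. poly D y \<noteq> 0"
proof -
  have "open {y. poly D y \<noteq> 0}"
    by (intro open_Collect_neq continuous_intros)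
  then show ?thesis
    using assms eventually_nhds_in_open by fastforce
qed

lemma deriv_poly_quotient:
  fixes N D :: "real poly"
  assumes "poly D y \<noteq> 0"
  shows "deriv (\<lambda>y. poly N y / poly D y) y = poly (pderiv N * D - N * pderiv D) y / poly D y ^ 2"
  using assms
  by (intro DERIV_imp_deriv) (auto intro!: derivative_eq_intros simp: power2_eq_square algebra_simps)

lemma poly_map_poly_of_real: "poly (map_poly of_real p) (of_real x) = of_real (poly p x)"
  by (induction p) (auto simp: map_poly_pCons)

lemma map_poly_of_real_add: "map_poly of_real (p + q) = map_poly of_real p + map_poly of_real q"
  by (rule poly_eqI) (simp add: coeff_map_poly)

lemma map_poly_of_real_diff: "map_poly of_real (p - q) = map_poly of_real p - map_poly of_real q"
  by (rule poly_eqI) (simp add: coeff_map_poly)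

lemma map_poly_of_real_mult: "map_poly of_real (p * q) = map_poly of_real p * map_poly of_real q"
  by (rule poly_eqI) (simp add: coeff_map_poly coeff_mult of_real_sum)

lemma map_poly_of_real_power: "map_poly of_real (p ^ n) = map_poly of_real p ^ n"
  by (induction n) (simp_all add: map_poly_of_real_mult)

lemma map_poly_of_real_pderiv: "map_poly of_real (pderiv p) = pderiv (map_poly of_real p)"
  by (rule poly_eqI) (simp add: coeff_map_poly coeff_pderiv)

lemma coprime_no_common_complex_root:
  fixes A B :: "real poly"
  assumes "coprime A B" and "poly (map_poly of_real B) z = 0"
  shows "poly (map_poly of_real A) (z :: complex) \<noteq> 0"
proof -
  obtain u v where "u * A + v * B = 1"
    using bezout_coefficients_fst_snd[of A B] assms(1) by auto
  then have "poly (map_poly of_real u * map_poly of_real A + map_poly of_real v * map_poly of_real B) z = 1"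
    by (metis map_poly_of_real_add map_poly_of_real_mult map_poly_1' of_real_1 poly_1)
  then show ?thesis
    using assms(2) by auto
qed

section \<open>Second-order equations with polynomial coefficients\<close>

(* B^3 (c2 f'' + c1 f' + c0 f) for f = A/B. *)
definition ode_numer :: "'a::idom poly \<Rightarrow> 'a poly \<Rightarrow> 'a poly \<Rightarrow> 'a poly \<Rightarrow> 'a poly \<Rightarrow> 'a poly" where
  "ode_numer c2 c1 c0 A B =
     c2 * (pderiv (pderiv A) * B^2 - 2 * pderiv A * pderiv B * B - A * pderiv (pderiv B) * B
           + 2 * A * (pderiv B)^2)
   + c1 * (pderiv A * B - A * pderiv B) * B + c0 * A * B^2"

lemma ode_numer_1:
  "ode_numer c2 c1 c0 A 1 = c2 * pderiv (pderiv A) + c1 * pderiv A + c0 * A"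
  by (simp add: ode_numer_def)

lemma ode_numer_mult_const:
  assumes "pderiv k = 0" "pderiv l = 0"
  shows "ode_numer c2 c1 c0 (k * A) (l * B) = k * l^2 * ode_numer c2 c1 c0 A B"
  unfolding ode_numer_def by (simp add: pderiv_mult assms algebra_simps power2_eq_square)

lemma ode_numer_rational:
  fixes N D c2 c1 c0 :: "real poly"
  assumes D: "poly D x \<noteq> 0" and f: "\<forall>\<^sub>F y in nhds x. f y = poly N y / poly D y"
  shows "poly D x ^ 3 * (poly c2 x * deriv (deriv f) x + poly c1 x * deriv f x + poly c0 x * f x)
       = poly (ode_numer c2 c1 c0 N D) x"
proof -
  define M where "M = pderiv N * D - N * pderiv D"
  have deriv_f: "\<forall>\<^sub>F y in nhds x. deriv f y = poly M y / poly (D^2) y"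
    using eventually_poly_nonzero[OF D] eventually_eventually[THEN iffD2, OF f]
  proof eventually_elim
    case (elim y)
    then show ?case
      using deriv_cong_ev[OF elim(2) refl] deriv_poly_quotient[OF elim(1)] by (simp add: M_def)
  qed
  then have f1: "deriv f x = poly M x / poly (D^2) x"
    by (rule eventually_nhds_x_imp_x)
  have "deriv (deriv f) x = deriv (\<lambda>y. poly M y / poly (D^2) y) x"
    using deriv_f by (rule deriv_cong_ev) simp
  also have "\<dots> = poly (pderiv M * D^2 - M * pderiv (D^2)) x / poly (D^2) x ^ 2"
    using D by (intro deriv_poly_quotient) simp
  finally have f2: "deriv (deriv f) x = poly (pderiv M * D^2 - M * pderiv (D^2)) x / poly (D^2) x ^ 2" .
  have f0: "f x = poly N x / poly D x"
    using f by (rule eventually_nhds_x_imp_x)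
  have pM: "pderiv M = pderiv (pderiv N) * D - N * pderiv (pderiv D)"
    and pD2: "pderiv (D^2) = 2 * D * pderiv D"
    by (simp_all add: M_def pderiv_mult pderiv_diff power2_eq_square)
  have F2: "poly D x ^ 3 * deriv (deriv f) x
      = poly (pderiv (pderiv N) * D^2 - 2 * pderiv N * pderiv D * D - N * pderiv (pderiv D) * D
              + 2 * N * (pderiv D)^2) x"
    using D unfolding f2 pM pD2 by (simp add: M_def field_simps power2_eq_square power3_eq_cube)
  have F1: "poly D x ^ 3 * deriv f x = poly ((pderiv N * D - N * pderiv D) * D) x"
    using D unfolding f1 by (simp add: M_def field_simps power2_eq_square power3_eq_cube)
  have F0: "poly D x ^ 3 * f x = poly (N * D^2) x"
    using D unfolding f0 by (simp add: field_simps power2_eq_square power3_eq_cube)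
  have "poly D x ^ 3 * (poly c2 x * deriv (deriv f) x + poly c1 x * deriv f x + poly c0 x * f x)
      = poly c2 x * (poly D x ^ 3 * deriv (deriv f) x) + poly c1 x * (poly D x ^ 3 * deriv f x)
        + poly c0 x * (poly D x ^ 3 * f x)"
    by (simp add: algebra_simps)
  also have "\<dots> = poly (ode_numer c2 c1 c0 N D) x"
    unfolding F2 F1 F0 ode_numer_def by (simp only: poly_add poly_mult)
  finally show ?thesis .
qed

(* Frobenius: if c is a regular singular point, the exponent r - s of z^r G / (z^s C) at c is a
   root of the indicial polynomial. *)
lemma ode_numer_indicial_equation:
  fixes c :: "'a::field_char_0"
  defines "z \<equiv> [:-c, 1:]"
  assumes E: "ode_numer c2 c1 c0 (z^r * G) (z^s * C) = 0"
    and c2: "c2 = z^m * e2" and c1: "z * c1 = z^m * e1" and c0: "z^2 * c0 = z^m * e0"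
    and G: "poly G c \<noteq> 0" and C: "poly C c \<noteq> 0"
  shows "(of_nat r - of_nat s) * (of_nat r - of_nat s - 1) * poly e2 c
         + (of_nat r - of_nat s) * poly e1 c + poly e0 c = 0"
proof -
  have z: "pderiv z = 1" "poly z c = 0" "z \<noteq> 0"
    by (simp_all add: z_def pderiv_pCons)
  define A B where "A = z^r * G" and "B = z^s * C"
  define a1 a2 b1 b2 where
    "a1 = of_nat r * G + z * pderiv G"
    and "a2 = of_nat r * (of_nat r - 1) * G + 2 * of_nat r * (z * pderiv G) + z^2 * pderiv (pderiv G)"
    and "b1 = of_nat s * C + z * pderiv C"
    and "b2 = of_nat s * (of_nat s - 1) * C + 2 * of_nat s * (z * pderiv C) + z^2 * pderiv (pderiv C)"
  have A1: "z * pderiv A = z^r * a1" and A2: "z^2 * pderiv (pderiv A) = z^r * a2"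
    and B1: "z * pderiv B = z^s * b1" and B2: "z^2 * pderiv (pderiv B) = z^s * b2"
    unfolding A_def B_def a1_def a2_def b1_def b2_def
    by (simp_all only: pderiv_linear_power_mult[OF z(1)] pderiv2_linear_power_mult[OF z(1)])
  define K where "K = e2 * (a2 * C^2 - 2 * a1 * b1 * C - G * b2 * C + 2 * G * b1^2)
                      + e1 * (a1 * C - G * b1) * C + e0 * G * C^2"
  have "z^2 * ode_numer c2 c1 c0 A B
      = c2 * ((z^2 * pderiv (pderiv A)) * B^2 - 2 * (z * pderiv A) * (z * pderiv B) * B
              - A * (z^2 * pderiv (pderiv B)) * B + 2 * A * (z * pderiv B)^2)
        + (z * c1) * ((z * pderiv A) * B - A * (z * pderiv B)) * B + (z^2 * c0) * A * B^2"
    unfolding ode_numer_def by (simp add: algebra_simps power2_eq_square)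
  also have "\<dots> = z^m * z^r * z^s * z^s * K"
    unfolding A1 A2 B1 B2 c1 c0 unfolding c2 A_def B_def K_def
    by (simp add: algebra_simps power2_eq_square)
  finally have "K = 0"
    using E z(3) by (simp add: A_def B_def)
  moreover have "poly K c = poly G c * poly C c ^ 2 *
      ((of_nat r - of_nat s) * (of_nat r - of_nat s - 1) * poly e2 c
       + (of_nat r - of_nat s) * poly e1 c + poly e0 c)"
    using z(2) by (simp add: K_def a1_def a2_def b1_def b2_def algebra_simps power2_eq_square)
  ultimately show ?thesis
    using G C by simp
qed

lemma ode_coeff_at_infinity:
  fixes P :: "'a::idom poly"
  assumes c2: "degree c2 \<le> k" and c1: "degree ([:0, 1:] * c1) \<le> k"
    and c0: "degree ([:0, 1:]^2 * c0) \<le> k" and P: "degree P \<le> n"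
  shows "coeff ([:0, 1:]^2 * (c2 * pderiv (pderiv P) + c1 * pderiv P + c0 * P)) (k + n)
       = (of_nat n * (of_nat n - 1) * coeff c2 k + of_nat n * coeff ([:0, 1:] * c1) k
          + coeff ([:0, 1:]^2 * c0) k) * coeff P n"
proof -
  have d2: "degree ([:0, 1:]^2 * pderiv (pderiv P)) \<le> n" and d1: "degree ([:0, 1:] * pderiv P) \<le> n"
    using P degree_euler_pderiv[of P] degree_euler_pderiv2[of P] by linarith+
  have "[:0, 1:]^2 * (c2 * pderiv (pderiv P) + c1 * pderiv P + c0 * P)
      = c2 * ([:0, 1:]^2 * pderiv (pderiv P)) + ([:0, 1:] * c1) * ([:0, 1:] * pderiv P)
        + ([:0, 1:]^2 * c0) * P"
    by (simp only: algebra_simps power2_eq_square)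
  then have "coeff ([:0, 1:]^2 * (c2 * pderiv (pderiv P) + c1 * pderiv P + c0 * P)) (k + n)
      = coeff c2 k * coeff ([:0, 1:]^2 * pderiv (pderiv P)) n
        + coeff ([:0, 1:] * c1) k * coeff ([:0, 1:] * pderiv P) n + coeff ([:0, 1:]^2 * c0) k * coeff P n"
    by (simp only: coeff_add coeff_mult_degree_le[OF c2 d2] coeff_mult_degree_le[OF c1 d1]
        coeff_mult_degree_le[OF c0 P])
  then show ?thesis
    unfolding coeff_euler_pderiv coeff_euler_pderiv2 by (simp only: algebra_simps)
qed

section \<open>The operator T_ng\<close>

(* The polynomial (x^2 - 1) eta(x; alpha, beta). *)
definition jacobi_H :: "'a::idom \<Rightarrow> 'a \<Rightarrow> 'a poly" where
  "jacobi_H \<alpha> \<beta> = [:\<alpha> - \<beta>, \<alpha> + \<beta> + 2:]"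

definition Tng_coeff2 :: "'a::idom poly \<Rightarrow> 'a poly" where
  "Tng_coeff2 \<tau> = [:-1, 0, 1:] * \<tau>"

definition Tng_coeff1 :: "'a::idom poly \<Rightarrow> 'a \<Rightarrow> 'a \<Rightarrow> 'a poly" where
  "Tng_coeff1 \<tau> \<alpha> \<beta> = jacobi_H \<alpha> \<beta> * \<tau> - 2 * [:-1, 0, 1:] * pderiv \<tau>"

definition Tng_coeff0 :: "'a::idom poly \<Rightarrow> 'a \<Rightarrow> 'a \<Rightarrow> 'a \<Rightarrow> 'a poly" where
  "Tng_coeff0 \<tau> \<alpha> \<beta> lam =
     [:-1, 0, 1:] * pderiv (pderiv \<tau>) - jacobi_H \<alpha> \<beta> * pderiv \<tau> + [:0, 2:] * pderiv \<tau> - [:lam:] * \<tau>"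

definition Tng_numer :: "'a::idom poly \<Rightarrow> 'a \<Rightarrow> 'a \<Rightarrow> 'a \<Rightarrow> 'a poly \<Rightarrow> 'a poly \<Rightarrow> 'a poly" where
  "Tng_numer \<tau> \<alpha> \<beta> lam = ode_numer (Tng_coeff2 \<tau>) (Tng_coeff1 \<tau> \<alpha> \<beta>) (Tng_coeff0 \<tau> \<alpha> \<beta> lam)"

lemma Tng_as_ode:
  fixes x :: real
  assumes "x \<noteq> 1" "x \<noteq> -1" "poly \<tau> x \<noteq> 0"
  shows "poly \<tau> x * (Tng \<tau> \<alpha> \<beta> f x - lam * f x)
       = poly (Tng_coeff2 \<tau>) x * deriv (deriv f) x + poly (Tng_coeff1 \<tau> \<alpha> \<beta>) x * deriv f x
         + poly (Tng_coeff0 \<tau> \<alpha> \<beta> lam) x * f x"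
proof -
  define r1 r2 where "r1 = poly (pderiv \<tau>) x / poly \<tau> x" and "r2 = poly (pderiv (pderiv \<tau>)) x / poly \<tau> x"
  have r: "poly (pderiv \<tau>) x = poly \<tau> x * r1" "poly (pderiv (pderiv \<tau>)) x = poly \<tau> x * r2"
    using assms(3) by (simp_all add: r1_def r2_def)
  have "(x^2 - 1) * eta \<alpha> \<beta> x
      = (x + 1) * ((x - 1) * ((\<alpha> + 1) / (x - 1))) + (x - 1) * ((x + 1) * ((\<beta> + 1) / (x + 1)))"
    by (simp add: eta_def algebra_simps power2_eq_square)
  also have "\<dots> = (x + 1) * (\<alpha> + 1) + (x - 1) * (\<beta> + 1)"
    using assms by simp
  also have "\<dots> = poly (jacobi_H \<alpha> \<beta>) x"
    by (simp add: jacobi_H_def algebra_simps)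
  finally have "(x^2 - 1) * eta \<alpha> \<beta> x = poly (jacobi_H \<alpha> \<beta>) x" .
  then have Tng_eq: "Tng \<tau> \<alpha> \<beta> f x =
      (x^2 - 1) * (deriv (deriv f) x - 2 * r1 * deriv f x + r2 * f x)
      + poly (jacobi_H \<alpha> \<beta>) x * (deriv f x - r1 * f x) + 2 * x * r1 * f x"
    by (simp add: Tng_def Let_def r1_def r2_def distrib_left mult.assoc[symmetric])
  show ?thesis
    unfolding Tng_eq Tng_coeff2_def Tng_coeff1_def Tng_coeff0_def
    by (simp add: r algebra_simps power2_eq_square)
qed

lemma Tng_eq_iff_Tng_numer:
  fixes x :: real
  assumes x: "x \<noteq> 1" "x \<noteq> -1" "poly \<tau> x \<noteq> 0"
    and D: "poly D x \<noteq> 0" and f: "\<forall>\<^sub>F y in nhds x. f y = poly N y / poly D y"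
  shows "Tng \<tau> \<alpha> \<beta> f x = lam * f x \<longleftrightarrow> poly (Tng_numer \<tau> \<alpha> \<beta> lam N D) x = 0"
proof -
  have "poly (Tng_numer \<tau> \<alpha> \<beta> lam N D) x
      = poly D x ^ 3 * (poly \<tau> x * (Tng \<tau> \<alpha> \<beta> f x - lam * f x))"
    unfolding Tng_numer_def Tng_as_ode[OF x] ode_numer_rational[OF D f] ..
  then show ?thesis
    using x D by simp
qed

lemma map_poly_of_real_Tng_numer:
  "map_poly of_real (Tng_numer \<tau> \<alpha> \<beta> lam N D)
     = Tng_numer (map_poly of_real \<tau>) (of_real \<alpha>) (of_real \<beta>) (of_real lam)
         (map_poly of_real N) (map_poly of_real D)"
  unfolding Tng_numer_def ode_numer_def Tng_coeff2_def Tng_coeff1_def Tng_coeff0_def jacobi_H_def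
  by (simp only: map_poly_of_real_add map_poly_of_real_diff map_poly_of_real_mult map_poly_of_real_power
      map_poly_of_real_pderiv map_poly_pCons map_poly_0 of_real_add of_real_diff of_real_1 of_real_0
      of_real_minus of_real_numeral of_real_0 numeral_poly)

lemma Tng_numer_indicial_equation:
  fixes x0 :: "'a::field_char_0"
  defines "z \<equiv> [:-x0, 1:]"
  assumes E: "Tng_numer \<tau> \<alpha> \<beta> lam (z^r * G) (z^s * C) = 0"
    and \<tau>: "\<tau> = z^m * U" and U: "poly U x0 \<noteq> 0"
    and G: "poly G x0 \<noteq> 0" and C: "poly C x0 \<noteq> 0" and x0: "x0^2 \<noteq> 1"
  shows "(of_nat r - of_nat s) * (of_nat r - of_nat s - 2 * of_nat m - 1) + of_nat m * (of_nat m - 1) = (0 :: 'a)"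
proof -
  have z: "pderiv z = 1" "poly z x0 = 0"
    by (simp_all add: z_def pderiv_pCons)
  define Q H where "Q = ([:-1, 0, 1:] :: 'a poly)" and "H = jacobi_H \<alpha> \<beta>"
  define t1 t2 where "t1 = of_nat m * U + z * pderiv U"
    and "t2 = of_nat m * (of_nat m - 1) * U + 2 * of_nat m * (z * pderiv U) + z^2 * pderiv (pderiv U)"
  have T1: "z * pderiv \<tau> = z^m * t1" and T2: "z^2 * pderiv (pderiv \<tau>) = z^m * t2"
    unfolding \<tau> t1_def t2_def
    by (simp_all only: pderiv_linear_power_mult[OF z(1)] pderiv2_linear_power_mult[OF z(1)])
  have c2: "Tng_coeff2 \<tau> = z^m * (Q * U)"
    by (simp add: Tng_coeff2_def Q_def \<tau> algebra_simps)
  have c1: "z * Tng_coeff1 \<tau> \<alpha> \<beta> = z^m * (z * H * U - 2 * Q * t1)"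
  proof -
    have "z * Tng_coeff1 \<tau> \<alpha> \<beta> = z * H * \<tau> - 2 * Q * (z * pderiv \<tau>)"
      by (simp add: Tng_coeff1_def Q_def H_def algebra_simps)
    then show ?thesis
      unfolding T1 by (simp add: \<tau> algebra_simps)
  qed
  have c0: "z^2 * Tng_coeff0 \<tau> \<alpha> \<beta> lam
      = z^m * (Q * t2 - z * H * t1 + [:0, 2:] * z * t1 - [:lam:] * z^2 * U)"
  proof -
    have "z^2 * Tng_coeff0 \<tau> \<alpha> \<beta> lam = Q * (z^2 * pderiv (pderiv \<tau>)) - z * H * (z * pderiv \<tau>)
        + [:0, 2:] * z * (z * pderiv \<tau>) - [:lam:] * z^2 * \<tau>"
      by (simp add: Tng_coeff0_def Q_def H_def algebra_simps power2_eq_square)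
    then show ?thesis
      unfolding T1 T2 by (simp add: \<tau> algebra_simps)
  qed
  have "(of_nat r - of_nat s) * (of_nat r - of_nat s - 1) * poly (Q * U) x0
      + (of_nat r - of_nat s) * poly (z * H * U - 2 * Q * t1) x0
      + poly (Q * t2 - z * H * t1 + [:0, 2:] * z * t1 - [:lam:] * z^2 * U) x0 = 0"
    using E[unfolded Tng_numer_def] c2 c1 c0 G C unfolding z_def by (rule ode_numer_indicial_equation)
  moreover have "(of_nat r - of_nat s) * (of_nat r - of_nat s - 1) * poly (Q * U) x0
      + (of_nat r - of_nat s) * poly (z * H * U - 2 * Q * t1) x0
      + poly (Q * t2 - z * H * t1 + [:0, 2:] * z * t1 - [:lam:] * z^2 * U) x0
      = poly Q x0 * poly U x0 *
        ((of_nat r - of_nat s) * (of_nat r - of_nat s - 2 * of_nat m - 1) + of_nat m * (of_nat m - 1))"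
    using z(2) by (simp add: t1_def t2_def algebra_simps)
  moreover have "poly Q x0 \<noteq> 0"
    using x0 by (simp add: Q_def power2_eq_square)
  ultimately show ?thesis
    using U by simp
qed

lemma Tng_numer_no_pole:
  fixes x0 :: "'a::field_char_0"
  assumes E: "Tng_numer \<tau> \<alpha> \<beta> lam A B = 0" and \<tau>: "\<tau> \<noteq> 0" and B: "B \<noteq> 0"
    and A: "poly A x0 \<noteq> 0" and x0: "x0^2 \<noteq> 1"
  shows "poly B x0 \<noteq> 0"
proof
  assume "poly B x0 = 0"
  then have s: "order x0 B \<noteq> 0"
    using B by (simp add: order_root)
  obtain C where B_eq: "B = [:-x0, 1:] ^ order x0 B * C" and "\<not> [:-x0, 1:] dvd C"
    using order_decomp[OF B] by blast
  then have C: "poly C x0 \<noteq> 0"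
    by (simp add: poly_eq_0_iff_dvd)
  obtain U where \<tau>_eq: "\<tau> = [:-x0, 1:] ^ order x0 \<tau> * U" and "\<not> [:-x0, 1:] dvd U"
    using order_decomp[OF \<tau>] by blast
  then have U: "poly U x0 \<noteq> 0"
    by (simp add: poly_eq_0_iff_dvd)
  define s m where "s = order x0 B" and "m = order x0 \<tau>"
  have E0: "Tng_numer \<tau> \<alpha> \<beta> lam ([:-x0, 1:] ^ 0 * A) ([:-x0, 1:] ^ s * C) = 0"
    using E B_eq by (simp add: s_def)
  have "(0 - of_nat s) * (0 - of_nat s - 2 * of_nat m - 1) + of_nat m * (of_nat m - 1) = (0 :: 'a)"
    using Tng_numer_indicial_equation[OF E0 \<tau>_eq U A C x0] by (simp add: m_def)
  moreover have "(0 - of_nat s) * (0 - of_nat s - 2 * of_nat m - 1) + of_nat m * (of_nat m - 1)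
      = (of_nat (s * (s + 2 * m + 1) + m * (m - 1)) :: 'a)"
    by (cases m) (simp_all add: algebra_simps)
  ultimately show False
    using s by (simp add: s_def del: of_nat_add of_nat_mult)
qed

lemma Tng_numer_coprime_imp_const_denom:
  fixes A B :: "real poly"
  assumes E: "Tng_numer \<tau> \<alpha> \<beta> lam A B = 0" and AB: "coprime A B" and \<tau>: "\<tau> \<noteq> 0"
    and B: "B \<noteq> 0" "poly B 1 \<noteq> 0" "poly B (-1) \<noteq> 0"
  shows "degree B = 0"
proof (rule ccontr)
  let ?c = "map_poly (of_real :: real \<Rightarrow> complex)"
  assume "degree B \<noteq> 0"
  then have "\<not> constant (poly (?c B))"
    by (simp add: constant_degree degree_map_poly)
  then obtain z where z: "poly (?c B) z = 0"
    using fundamental_theorem_of_algebra by blast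
  have "z \<noteq> 1" "z \<noteq> -1"
    using z B(2,3) poly_map_poly_of_real[where 'a=complex, of B 1]
      poly_map_poly_of_real[where 'a=complex, of B "-1"] by auto
  then have z_pm1: "z^2 \<noteq> 1"
    by (simp add: power2_eq_1_iff)
  have E': "Tng_numer (?c \<tau>) (of_real \<alpha>) (of_real \<beta>) (of_real lam) (?c A) (?c B) = 0"
    using E by (simp flip: map_poly_of_real_Tng_numer)
  have \<tau>': "?c \<tau> \<noteq> 0" and B': "?c B \<noteq> 0"
    using \<tau> B(1) by (simp_all add: map_poly_eq_0_iff)
  have "poly (?c B) z \<noteq> 0"
    by (rule Tng_numer_no_pole[OF E' \<tau>' B' coprime_no_common_complex_root[OF AB z] z_pm1])
  then show False
    using z by simp
qed

lemma Tng_numer_indicial_equation_pm1: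
  fixes c :: "'a::field_char_0"
  defines "z \<equiv> [:-c, 1:]"
  assumes E: "Tng_numer \<tau> \<alpha> \<beta> lam (z^r * G) 1 = 0"
    and c: "c^2 = 1" and G: "poly G c \<noteq> 0" and \<tau>: "poly \<tau> c \<noteq> 0"
  shows "of_nat r * (2 * c * (of_nat r - 1) + poly (jacobi_H \<alpha> \<beta>) c) = 0"
proof -
  have Q: "[:-1, 0, 1:] = z * [:c, 1:]"
    using c by (simp add: z_def power2_eq_square)
  have E0: "ode_numer (Tng_coeff2 \<tau>) (Tng_coeff1 \<tau> \<alpha> \<beta>) (Tng_coeff0 \<tau> \<alpha> \<beta> lam)
      (z^r * G) (z^0 * 1) = 0"
    using E by (simp add: Tng_numer_def)
  have c2: "Tng_coeff2 \<tau> = z^1 * ([:c, 1:] * \<tau>)"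
    unfolding Tng_coeff2_def Q by (simp only: power_one_right mult.assoc)
  have c1: "z * Tng_coeff1 \<tau> \<alpha> \<beta> = z^1 * Tng_coeff1 \<tau> \<alpha> \<beta>"
    by simp
  have c0: "z^2 * Tng_coeff0 \<tau> \<alpha> \<beta> lam = z^1 * (z * Tng_coeff0 \<tau> \<alpha> \<beta> lam)"
    by (simp add: power2_eq_square)
  have "of_nat r * (of_nat r - 1) * poly ([:c, 1:] * \<tau>) c
      + of_nat r * poly (Tng_coeff1 \<tau> \<alpha> \<beta>) c + poly (z * Tng_coeff0 \<tau> \<alpha> \<beta> lam) c = 0"
    using ode_numer_indicial_equation[OF E0[unfolded z_def] c2[unfolded z_def] c1[unfolded z_def]
        c0[unfolded z_def] G] z_def
    by simp
  moreover have "poly (Tng_coeff1 \<tau> \<alpha> \<beta>) c = poly (jacobi_H \<alpha> \<beta>) c * poly \<tau> c"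
    using c by (simp add: Tng_coeff1_def power2_eq_square)
  ultimately have "poly \<tau> c * (of_nat r * (2 * c * (of_nat r - 1) + poly (jacobi_H \<alpha> \<beta>) c)) = 0"
    by (simp add: z_def algebra_simps)
  then show ?thesis
    using \<tau> by simp
qed

lemma euler_Tng_coeff1:
  "[:0, 1:] * Tng_coeff1 \<tau> \<alpha> \<beta>
     = [:0, \<alpha> - \<beta>, \<alpha> + \<beta> + 2:] * \<tau> - [:-2, 0, 2:] * ([:0, 1:] * pderiv \<tau>)"
  by (simp add: Tng_coeff1_def jacobi_H_def algebra_simps numeral_poly)

lemma euler_Tng_coeff0:
  "[:0, 1:]^2 * Tng_coeff0 \<tau> \<alpha> \<beta> lam
     = [:-1, 0, 1:] * ([:0, 1:]^2 * pderiv (pderiv \<tau>))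
       - [:0, \<alpha> - \<beta>, \<alpha> + \<beta> + 2:] * ([:0, 1:] * pderiv \<tau>)
       + [:0, 0, 2:] * ([:0, 1:] * pderiv \<tau>) - [:0, 0, lam:] * \<tau>"
  by (simp add: Tng_coeff0_def jacobi_H_def algebra_simps power2_eq_square)

lemma Tng_numer_eigenvalue:
  fixes \<tau> P :: "'a::field_char_0 poly"
  assumes E: "Tng_numer \<tau> \<alpha> \<beta> lam P 1 = 0" and P: "P \<noteq> 0" and \<tau>: "\<tau> \<noteq> 0"
  shows "lam = (of_nat (degree P) - of_nat (degree \<tau>)) * (of_nat (degree P) - of_nat (degree \<tau>) + \<alpha> + \<beta> + 1)"
proof -
  define N n t where "N = degree \<tau>" and "n = degree P" and "t = lead_coeff \<tau>"
  have d0: "degree \<tau> \<le> N" and d1: "degree ([:0, 1:] * pderiv \<tau>) \<le> N"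
    and d2: "degree ([:0, 1:]^2 * pderiv (pderiv \<tau>)) \<le> N"
    using degree_euler_pderiv[of \<tau>] degree_euler_pderiv2[of \<tau>] by (simp_all add: N_def)
  have quadratic: "degree [:a, b, c:] \<le> 2" for a b c :: 'a
    by (rule degree_le) (auto simp: coeff_pCons split: nat.split)
  have top_quadratic: "coeff [:a, b, c:] 2 = c" for a b c :: 'a
    by (simp add: numeral_2_eq_2)
  note deg = degree_mult_le_add[OF quadratic] and top = coeff_mult_degree_le[OF quadratic]
  have "degree (Tng_coeff2 \<tau>) \<le> 2 + N" "degree ([:0, 1:] * Tng_coeff1 \<tau> \<alpha> \<beta>) \<le> 2 + N"
    "degree ([:0, 1:]^2 * Tng_coeff0 \<tau> \<alpha> \<beta> lam) \<le> 2 + N"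
    unfolding Tng_coeff2_def euler_Tng_coeff1 euler_Tng_coeff0
    by (intro degree_add_le degree_diff_le deg d0 d1 d2)+
  then have "coeff ([:0, 1:]^2 * Tng_numer \<tau> \<alpha> \<beta> lam P 1) (2 + N + n)
      = (of_nat n * (of_nat n - 1) * coeff (Tng_coeff2 \<tau>) (2 + N)
         + of_nat n * coeff ([:0, 1:] * Tng_coeff1 \<tau> \<alpha> \<beta>) (2 + N)
         + coeff ([:0, 1:]^2 * Tng_coeff0 \<tau> \<alpha> \<beta> lam) (2 + N)) * lead_coeff P"
    unfolding Tng_numer_def ode_numer_1 n_def by (intro ode_coeff_at_infinity) simp_all
  also have "\<dots> = (of_nat n * (of_nat n - 1) * t
         + of_nat n * ((\<alpha> + \<beta> + 2) * t - 2 * (of_nat N * t))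
         + (of_nat N * (of_nat N - 1) * t - (\<alpha> + \<beta> + 2) * (of_nat N * t) + 2 * (of_nat N * t) - lam * t))
         * lead_coeff P"
    unfolding Tng_coeff2_def euler_Tng_coeff1 euler_Tng_coeff0 coeff_add coeff_diff
      top[OF d0] top[OF d1] top[OF d2] coeff_euler_pderiv coeff_euler_pderiv2
    by (simp add: top_quadratic t_def N_def)
  also have "\<dots> = t * lead_coeff P *
      ((of_nat n - of_nat N) * (of_nat n - of_nat N + \<alpha> + \<beta> + 1) - lam)"
    by (simp add: algebra_simps)
  finally have "t * lead_coeff P * ((of_nat n - of_nat N) * (of_nat n - of_nat N + \<alpha> + \<beta> + 1) - lam) = 0"
    using E by simp
  then show ?thesis
    using P \<tau> by (simp add: t_def N_def n_def)
qed

section \<open>Eigenpolynomials and quasi-polynomial eigenfunctions\<close>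

lemma eigenpoly_ng_iff_Tng_numer:
  assumes \<tau>: "\<tau> \<noteq> 0"
  shows "eigenpoly_ng \<tau> \<alpha> \<beta> P lam \<longleftrightarrow> P \<noteq> 0 \<and> Tng_numer \<tau> \<alpha> \<beta> lam P 1 = 0"
proof -
  have pointwise: "Tng \<tau> \<alpha> \<beta> (poly P) x = lam * poly P x \<longleftrightarrow> poly (Tng_numer \<tau> \<alpha> \<beta> lam P 1) x = 0"
    if "x \<noteq> 1" "x \<noteq> -1" "poly \<tau> x \<noteq> 0" for x
    using that by (intro Tng_eq_iff_Tng_numer) simp_all
  have fin: "finite ({1, -1} \<union> {x. poly \<tau> x = 0})"
    using poly_roots_finite[OF \<tau>] by simp
  have "(\<forall>x. x \<noteq> 1 \<and> x \<noteq> -1 \<and> poly \<tau> x \<noteq> 0 \<longrightarrow> poly (Tng_numer \<tau> \<alpha> \<beta> lam P 1) x = 0)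
      \<longleftrightarrow> Tng_numer \<tau> \<alpha> \<beta> lam P 1 = 0"
  proof
    assume "\<forall>x. x \<noteq> 1 \<and> x \<noteq> -1 \<and> poly \<tau> x \<noteq> 0 \<longrightarrow> poly (Tng_numer \<tau> \<alpha> \<beta> lam P 1) x = 0"
    then show "Tng_numer \<tau> \<alpha> \<beta> lam P 1 = 0"
      by (intro poly_eq_0_if_cofinite_roots[OF fin]) blast
  qed simp
  then show ?thesis
    unfolding eigenpoly_ng_def using pointwise by blast
qed

lemma eigenpoly_ng_eigenvalue:
  assumes "\<tau> \<noteq> 0" and "eigenpoly_ng \<tau> \<alpha> \<beta> P lam"
  shows "lam = (real (degree P) - real (degree \<tau>)) * (real (degree P) - real (degree \<tau>) + \<alpha> + \<beta> + 1)"
proof -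
  have "Tng_numer \<tau> \<alpha> \<beta> lam P 1 = 0" "P \<noteq> 0"
    using assms by (simp_all add: eigenpoly_ng_iff_Tng_numer)
  from Tng_numer_eigenvalue[OF this assms(1)] show ?thesis
    by simp
qed

lemma eigenpoly_ng_in_Ppm:
  assumes \<tau>: "\<tau> \<in> Ppm" and P: "eigenpoly_ng \<tau> \<alpha> \<beta> P lam"
    and \<alpha>\<beta>: "\<forall>m::int. m < 0 \<longrightarrow> \<alpha> \<noteq> of_int m \<and> \<beta> \<noteq> of_int m"
  shows "P \<in> Ppm"
proof -
  have "\<tau> \<noteq> 0"
    using \<tau> by (auto simp: Ppm_def)
  then have P0: "P \<noteq> 0" and E: "Tng_numer \<tau> \<alpha> \<beta> lam P 1 = 0"
    using P by (simp_all add: eigenpoly_ng_iff_Tng_numer)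
  have indicial: "2 * c * (of_nat (order c P) - 1) + poly (jacobi_H \<alpha> \<beta>) c = 0"
    if c: "c^2 = 1" and root: "poly P c = 0" for c
  proof -
    obtain G where PG: "P = [:-c, 1:] ^ order c P * G" and "\<not> [:-c, 1:] dvd G"
      using order_decomp[OF P0] by blast
    then have "poly G c \<noteq> 0"
      by (simp add: poly_eq_0_iff_dvd)
    moreover have "poly \<tau> c \<noteq> 0"
      using \<tau> c by (auto simp: Ppm_def power2_eq_1_iff)
    moreover have "Tng_numer \<tau> \<alpha> \<beta> lam ([:-c, 1:] ^ order c P * G) 1 = 0"
      using E by (simp only: PG[symmetric])
    ultimately have "of_nat (order c P) * (2 * c * (of_nat (order c P) - 1) + poly (jacobi_H \<alpha> \<beta>) c) = 0"
      using c by (intro Tng_numer_indicial_equation_pm1)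
    moreover have "order c P \<noteq> 0"
      using root P0 by (simp add: order_root)
    ultimately show ?thesis
      by simp
  qed
  have "poly P 1 \<noteq> 0"
  proof
    assume "poly P 1 = 0"
    then have "\<alpha> = of_int (- int (order 1 P))" "order 1 P \<noteq> 0"
      using indicial[of 1] P0 by (simp_all add: jacobi_H_def algebra_simps order_root)
    then show False
      using \<alpha>\<beta>[rule_format, of "- int (order 1 P)"] by simp
  qed
  moreover have "poly P (-1) \<noteq> 0"
  proof
    assume "poly P (-1) = 0"
    then have "\<beta> = of_int (- int (order (-1) P))" "order (-1) P \<noteq> 0"
      using indicial[of "-1"] P0 by (simp_all add: jacobi_H_def algebra_simps order_root)
    then show False
      using \<alpha>\<beta>[rule_format, of "- int (order (-1) P)"] by simp
  qed
  ultimately show ?thesis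
    by (simp add: Ppm_def)
qed

lemma quasi_eig_rg_imp_Tng_numer:
  assumes Q: "quasi_eig_rg \<tau> \<alpha> \<beta> p q lam" and \<tau>: "\<tau> \<noteq> 0" and B: "B \<noteq> 0"
    and AB: "\<tau> * p * B = A * q"
  shows "Tng_numer \<tau> \<alpha> \<beta> lam A B = 0"
proof (rule poly_eq_0_if_cofinite_roots)
  have q: "q \<noteq> 0"
    using Q by (auto simp: quasi_eig_rg_def Ppm_def)
  show "finite ({1, -1} \<union> {x. poly \<tau> x = 0} \<union> {x. poly q x = 0} \<union> {x. poly B x = 0})"
    using poly_roots_finite[OF \<tau>] poly_roots_finite[OF q] poly_roots_finite[OF B] by simp
  fix x
  assume "x \<notin> {1, -1} \<union> {x. poly \<tau> x = 0} \<union> {x. poly q x = 0} \<union> {x. poly B x = 0}"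
  then have x: "x \<noteq> 1" "x \<noteq> -1" "poly \<tau> x \<noteq> 0" and qx: "poly q x \<noteq> 0" and Bx: "poly B x \<noteq> 0"
    by auto
  have ev: "\<forall>\<^sub>F y in nhds x. poly \<tau> y * (poly p y / poly q y) = poly A y / poly B y"
    using eventually_poly_nonzero[OF qx] eventually_poly_nonzero[OF Bx]
  proof eventually_elim
    case (elim y)
    then show ?case
      using arg_cong[OF AB, of "\<lambda>F. poly F y"] by (simp add: field_simps)
  qed
  have "Trg \<tau> \<alpha> \<beta> (\<lambda>y. poly p y / poly q y) x = lam * (poly p x / poly q x)"
    using Q x qx by (simp add: quasi_eig_rg_def)
  then have "Tng \<tau> \<alpha> \<beta> (\<lambda>y. poly \<tau> y * (poly p y / poly q y)) x = lam * (poly \<tau> x * (poly p x / poly q x))"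
    using x(3) by (simp add: Trg_def field_simps)
  then show "poly (Tng_numer \<tau> \<alpha> \<beta> lam A B) x = 0"
    using Tng_eq_iff_Tng_numer[OF x Bx ev] by simp
qed

lemma quasi_eig_rg_reduces_to_polynomial:
  assumes \<tau>: "\<tau> \<noteq> 0" and Q: "quasi_eig_rg \<tau> \<alpha> \<beta> p q lam"
  obtains P where "Tng_numer \<tau> \<alpha> \<beta> lam P 1 = 0" and "p * \<tau> = P * q"
proof -
  have q: "q \<in> Ppm"
    using Q by (simp add: quasi_eig_rg_def)
  then have q0: "q \<noteq> 0"
    by (auto simp: Ppm_def)
  define g A B where "g = gcd (\<tau> * p) q" and "A = \<tau> * p div g" and "B = q div g"
  have \<tau>p: "\<tau> * p = A * g" and qB: "q = B * g"
    by (simp_all add: A_def B_def g_def)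
  have AB: "coprime A B"
    unfolding A_def B_def g_def using q0 by (intro div_gcd_coprime) simp
  have B0: "B \<noteq> 0"
    using q0 qB by auto
  have B_pm1: "poly B 1 \<noteq> 0" "poly B (-1) \<noteq> 0"
    using q qB by (auto simp: Ppm_def)
  have E: "Tng_numer \<tau> \<alpha> \<beta> lam A B = 0"
    using Q \<tau> B0 by (rule quasi_eig_rg_imp_Tng_numer) (simp add: \<tau>p qB mult_ac)
  then have "degree B = 0"
    using Tng_numer_coprime_imp_const_denom[OF _ AB \<tau> B0 B_pm1] by blast
  then obtain b where B_eq: "B = [:b:]" and b: "b \<noteq> 0"
    using B0 by (metis degree_eq_zeroE pCons_0_0)
  define P where "P = smult (inverse b) A"
  have A_eq: "A = [:b:] * P"
    using b by (simp add: P_def)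
  have "[:b:] * [:b:]^2 * Tng_numer \<tau> \<alpha> \<beta> lam P 1 = 0"
    using E unfolding Tng_numer_def A_eq B_eq
    using ode_numer_mult_const[of "[:b:]" "[:b:]" _ _ _ P 1] by simp
  then have "Tng_numer \<tau> \<alpha> \<beta> lam P 1 = 0"
    using b by simp
  moreover have "p * \<tau> = P * q"
    using \<tau>p qB A_eq B_eq by (simp add: mult_ac)
  ultimately show thesis
    by (rule that)
qed

lemma quasi_eig_rg_imp_eigenpoly_ng:
  assumes \<tau>: "\<tau> \<in> Ppm" and Q: "quasi_eig_rg \<tau> \<alpha> \<beta> p q lam"
  shows "\<exists>P. P \<in> Ppm \<and> eigenpoly_ng \<tau> \<alpha> \<beta> P lam \<and> p * \<tau> = P * q
           \<and> int (degree p) - int (degree q) = int (degree P) - int (degree \<tau>)"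
proof -
  have p: "p \<in> Ppm" and q: "q \<in> Ppm"
    using Q by (simp_all add: quasi_eig_rg_def)
  then have \<tau>0: "\<tau> \<noteq> 0" and p0: "p \<noteq> 0" and q0: "q \<noteq> 0"
    using \<tau> by (auto simp: Ppm_def)
  obtain P where E: "Tng_numer \<tau> \<alpha> \<beta> lam P 1 = 0" and cross: "p * \<tau> = P * q"
    using quasi_eig_rg_reduces_to_polynomial[OF \<tau>0 Q] .
  have P0: "P \<noteq> 0"
    using cross p0 \<tau>0 by auto
  have "poly P c \<noteq> 0" if "poly p c \<noteq> 0" "poly \<tau> c \<noteq> 0" for c
    using that arg_cong[OF cross, of "\<lambda>F. poly F c"] by auto
  then have "P \<in> Ppm"
    using \<tau> p by (simp add: Ppm_def)
  moreover have "eigenpoly_ng \<tau> \<alpha> \<beta> P lam"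
    using E P0 \<tau>0 by (simp add: eigenpoly_ng_iff_Tng_numer)
  moreover have "degree p + degree \<tau> = degree P + degree q"
    using arg_cong[OF cross, of degree] p0 \<tau>0 q0 P0 by (simp add: degree_mult_eq)
  ultimately show ?thesis
    using cross by auto
qed

lemma eigenpoly_ng_imp_quasi_eig_rg:
  assumes \<tau>: "\<tau> \<in> Ppm" and P: "eigenpoly_ng \<tau> \<alpha> \<beta> P lam" and PP: "P \<in> Ppm"
  shows "quasi_eig_rg \<tau> \<alpha> \<beta> P \<tau> lam"
  unfolding quasi_eig_rg_def
proof (intro conjI allI impI)
  show "P \<in> Ppm" "\<tau> \<in> Ppm"
    using PP \<tau> by simp_all
  have "\<tau> \<noteq> 0"
    using \<tau> by (auto simp: Ppm_def)
  then have E: "Tng_numer \<tau> \<alpha> \<beta> lam P 1 = 0"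
    using P by (simp add: eigenpoly_ng_iff_Tng_numer)
  fix x
  assume x: "x \<noteq> 1 \<and> x \<noteq> -1 \<and> poly \<tau> x \<noteq> 0 \<and> poly \<tau> x \<noteq> 0"
  have ev: "\<forall>\<^sub>F y in nhds x. poly \<tau> y * (poly P y / poly \<tau> y) = poly P y / poly 1 y"
    using eventually_poly_nonzero[of \<tau> x] x by (auto elim: eventually_mono)
  have "Tng \<tau> \<alpha> \<beta> (\<lambda>y. poly \<tau> y * (poly P y / poly \<tau> y)) x
      = lam * (poly \<tau> x * (poly P x / poly \<tau> x))"
    using Tng_eq_iff_Tng_numer[OF _ _ _ _ ev] E x by simp
  then show "Trg \<tau> \<alpha> \<beta> (\<lambda>y. poly P y / poly \<tau> y) x = lam * (poly P x / poly \<tau> x)"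
    using x by (simp add: Trg_def)
qed

lemma quasi_eig_rg_eigenvalue:
  assumes "\<tau> \<in> Ppm" and "quasi_eig_rg \<tau> \<alpha> \<beta> p q lam"
  defines "k \<equiv> int (degree p) - int (degree q)"
  shows "lam = of_int k * (of_int k + \<alpha> + \<beta> + 1)"
proof -
  obtain P where "eigenpoly_ng \<tau> \<alpha> \<beta> P lam" and "k = int (degree P) - int (degree \<tau>)"
    using quasi_eig_rg_imp_eigenpoly_ng[OF assms(1,2)] k_def by blast
  moreover have "\<tau> \<noteq> 0"
    using assms(1) by (auto simp: Ppm_def)
  ultimately show ?thesis
    using eigenpoly_ng_eigenvalue by simp
qed

lemma I1_rg_eq_I_ng_shifted:
  assumes \<tau>: "\<tau> \<in> Ppm" and \<alpha>\<beta>: "\<forall>m::int. m < 0 \<longrightarrow> \<alpha> \<noteq> of_int m \<and> \<beta> \<noteq> of_int m"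
  shows "I1_rg \<tau> \<alpha> \<beta> = {int n - int (degree \<tau>) | n. n \<in> I_ng \<tau> \<alpha> \<beta>}"
proof (intro set_eqI iffI)
  fix k
  assume "k \<in> I1_rg \<tau> \<alpha> \<beta>"
  then obtain p q lam where "k = int (degree p) - int (degree q)" and "quasi_eig_rg \<tau> \<alpha> \<beta> p q lam"
    unfolding I1_rg_def by blast
  then show "k \<in> {int n - int (degree \<tau>) | n. n \<in> I_ng \<tau> \<alpha> \<beta>}"
    using quasi_eig_rg_imp_eigenpoly_ng[OF \<tau>] unfolding I_ng_def by fastforce
next
  fix k
  assume "k \<in> {int n - int (degree \<tau>) | n. n \<in> I_ng \<tau> \<alpha> \<beta>}"
  then obtain P lam where "k = int (degree P) - int (degree \<tau>)" and P: "eigenpoly_ng \<tau> \<alpha> \<beta> P lam"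
    unfolding I_ng_def by blast
  moreover have "quasi_eig_rg \<tau> \<alpha> \<beta> P \<tau> lam"
    using eigenpoly_ng_imp_quasi_eig_rg[OF \<tau> P eigenpoly_ng_in_Ppm[OF \<tau> P \<alpha>\<beta>]] .
  ultimately show "k \<in> I1_rg \<tau> \<alpha> \<beta>"
    unfolding I1_rg_def by blast
qed

lemma sigmaP_ng_eq_sigma1_rg:
  assumes \<tau>: "\<tau> \<in> Ppm" and \<alpha>\<beta>: "\<forall>m::int. m < 0 \<longrightarrow> \<alpha> \<noteq> of_int m \<and> \<beta> \<noteq> of_int m"
  shows "sigmaP_ng \<tau> \<alpha> \<beta> = sigma1_rg \<tau> \<alpha> \<beta>"
  unfolding sigmaP_ng_def sigma1_rg_def
  using quasi_eig_rg_imp_eigenpoly_ng[OF \<tau>]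
    eigenpoly_ng_imp_quasi_eig_rg[OF \<tau> _ eigenpoly_ng_in_Ppm[OF \<tau> _ \<alpha>\<beta>]]
  by blast

lemma sigma1_rg_eq_eigenvalues:
  assumes \<tau>: "\<tau> \<in> Ppm"
  shows "sigma1_rg \<tau> \<alpha> \<beta> = {of_int k * (of_int k + \<alpha> + \<beta> + 1) | k. k \<in> I1_rg \<tau> \<alpha> \<beta>}"
  unfolding sigma1_rg_def I1_rg_def
  using quasi_eig_rg_eigenvalue[OF \<tau>] by blast

theorem mainTheorem5:
  fixes \<tau> :: "real poly" and \<alpha> \<beta> :: real
  assumes tau: "\<tau> \<in> Ppm"
    and exc: "exceptional_ng \<tau> \<alpha> \<beta>"
  shows "(\<forall>p q lam. quasi_eig_rg \<tau> \<alpha> \<beta> p q lam \<longrightarrow>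
            (\<exists>P. P \<in> Ppm \<and> eigenpoly_ng \<tau> \<alpha> \<beta> P lam \<and> p * \<tau> = P * q \<and>
                 int (degree p) - int (degree q) \<in> I1_rg \<tau> \<alpha> \<beta> \<and>
                 int (degree p) - int (degree q) = int (degree P) - int (degree \<tau>)))
       \<and> ((\<forall>m::int. m < 0 \<longrightarrow> \<alpha> \<noteq> of_int m \<and> \<beta> \<noteq> of_int m) \<longrightarrow>
            I1_rg \<tau> \<alpha> \<beta> = {int n - int (degree \<tau>) | n. n \<in> I_ng \<tau> \<alpha> \<beta>}
          \<and> sigmaP_ng \<tau> \<alpha> \<beta> = sigma1_rg \<tau> \<alpha> \<beta>
          \<and> sigma1_rg \<tau> \<alpha> \<beta> = {of_int k * (of_int k + \<alpha> + \<beta> + 1) | k. k \<in> I1_rg \<tau> \<alpha> \<beta>})"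
proof (intro conjI impI allI)
  fix p q lam
  assume Q: "quasi_eig_rg \<tau> \<alpha> \<beta> p q lam"
  then have "int (degree p) - int (degree q) \<in> I1_rg \<tau> \<alpha> \<beta>"
    unfolding I1_rg_def by blast
  then show "\<exists>P. P \<in> Ppm \<and> eigenpoly_ng \<tau> \<alpha> \<beta> P lam \<and> p * \<tau> = P * q \<and>
      int (degree p) - int (degree q) \<in> I1_rg \<tau> \<alpha> \<beta> \<and>
      int (degree p) - int (degree q) = int (degree P) - int (degree \<tau>)"
    using quasi_eig_rg_imp_eigenpoly_ng[OF tau Q] by blast
next
  assume \<alpha>\<beta>: "\<forall>m::int. m < 0 \<longrightarrow> \<alpha> \<noteq> of_int m \<and> \<beta> \<noteq> of_int m"
  show "I1_rg \<tau> \<alpha> \<beta> = {int n - int (degree \<tau>) | n. n \<in> I_ng \<tau> \<alpha> \<beta>}"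
    using tau \<alpha>\<beta> by (rule I1_rg_eq_I_ng_shifted)
  show "sigmaP_ng \<tau> \<alpha> \<beta> = sigma1_rg \<tau> \<alpha> \<beta>"
    using tau \<alpha>\<beta> by (rule sigmaP_ng_eq_sigma1_rg)
  show "sigma1_rg \<tau> \<alpha> \<beta> = {of_int k * (of_int k + \<alpha> + \<beta> + 1) | k. k \<in> I1_rg \<tau> \<alpha> \<beta>}"
    using tau by (rule sigma1_rg_eq_eigenvalues)
qed

end
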